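(* Consider a sequence of problems indexed by $n$, with $p=p_n$ and a distribution of $(X,Y)$ that may depend on $n$. For each $n$, let $(X_1,Y_1),\dots,(X_n,Y_n)$ be i.i.d. copies of $(X,Y)$ with $X\in\mathbb{R}^p$, $Y\in\mathbb{R}$, $E(Y^2)<\infty$, $E(\|X\|^2)<\infty$, $E(X)=0$ and $\mathrm{Var}(X)=\mathbf{I}$. Let $\beta=E(XY)$, $\tau^2=\|\beta\|^2$, $W_i=X_iY_i$, $W=XY$, $\mathbf{A}=E(WW^T)$ and $\hat\tau^2=\binom{n}{2}^{-1}\sum_{i_1<i_2}W_{i_1}^TW_{i_2}$. Assume that $\|\mathbf{A}\|_F^2/n^2\to 0$ as $n\to\infty$ and that $\tau^2$ is bounded. Then $\hat\tau^2-\tau^2\to 0$ in probability.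
   Context: $\|\cdot\|_F$ is the Frobenius norm. $\beta$ is the slope of the best linear predictor of $Y$ given $X$; no linearity of $E(Y\mid X)$ is assumed. *)

theory Defs
  imports "HOL-Probability.Probability"
begin

text \<open>A vector in R^p is represented as a function nat => real whose values
  at indices j >= p are undefined (the carrier of PiM {..<p}). An observation
  (X,Y) lives in R^p x R.\<close>
definition obs_space :: "nat \<Rightarrow> ((nat \<Rightarrow> real) \<times> real) measure" where
  "obs_space p = (PiM {..<p} (\<lambda>_. borel)) \<Otimes>\<^sub>M borel"

definition beta_vec :: "'a measure \<Rightarrow> ('a \<Rightarrow> (nat \<Rightarrow> real) \<times> real) \<Rightarrow> nat \<Rightarrow> real" where
  "beta_vec M V j = (\<integral>\<omega>. fst (V \<omega>) j * snd (V \<omega>) \<partial>M)"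

definition tau2 :: "'a measure \<Rightarrow> nat \<Rightarrow> ('a \<Rightarrow> (nat \<Rightarrow> real) \<times> real) \<Rightarrow> real" where
  "tau2 M p V = (\<Sum>j<p. (beta_vec M V j)\<^sup>2)"

definition A_mat :: "'a measure \<Rightarrow> ('a \<Rightarrow> (nat \<Rightarrow> real) \<times> real) \<Rightarrow> nat \<Rightarrow> nat \<Rightarrow> real" where
  "A_mat M V j k = (\<integral>\<omega>. (fst (V \<omega>) j * snd (V \<omega>)) * (fst (V \<omega>) k * snd (V \<omega>)) \<partial>M)"

definition A_frob2 :: "'a measure \<Rightarrow> nat \<Rightarrow> ('a \<Rightarrow> (nat \<Rightarrow> real) \<times> real) \<Rightarrow> real" where
  "A_frob2 M p V = (\<Sum>j<p. \<Sum>k<p. (A_mat M V j k)\<^sup>2)"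

definition tau2_hat :: "nat \<Rightarrow> nat \<Rightarrow> (nat \<Rightarrow> 'a \<Rightarrow> (nat \<Rightarrow> real) \<times> real) \<Rightarrow> 'a \<Rightarrow> real" where
  "tau2_hat n p D \<omega> = inverse (real (n choose 2)) *
     (\<Sum>i2<n. \<Sum>i1<i2. \<Sum>j<p.
        (fst (D i1 \<omega>) j * snd (D i1 \<omega>)) * (fst (D i2 \<omega>) j * snd (D i2 \<omega>)))"

end

theory Submission
  imports Defs
begin

text \<open>The U-statistic has the Hoeffding
  decomposition
    tau_hat^2 - tau^2 = (2/n) sum_i beta^T (W_i - beta)
      + binom(n,2)^-1 sum_(i1<i2) (W_i1 - beta)^T (W_i2 - beta),
  and by independence the summands of each of the two sums are orthogonal in L^2. Hence
  E (tau_hat^2 - tau^2)^2 is at most 8/n E (beta^T (W - beta))^2 + 8/n^2 ||A - beta beta^T||_F^2.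
  Here E (beta^T (W - beta))^2 = beta^T A beta - tau^4 is at most tau^2 ||A||_F by Cauchy-Schwarz,
  and being nonnegative it also gives
  ||A - beta beta^T||_F^2 = ||A||_F^2 - 2 beta^T A beta + tau^4 <= ||A||_F^2.
  Chebyshev's inequality concludes.\<close>

lemma measurable_obs_coord [measurable]: "(\<lambda>x. fst x j) \<in> borel_measurable (obs_space p)"
proof (cases "j < p")
  case True
  show ?thesis
    unfolding obs_space_def by measurable (use True in simp)
next
  case False
  \<comment> \<open>beyond p the coordinate is the constant \<open>undefined\<close> on the carrier of PiM\<close>
  then have "fst x j = undefined" if "x \<in> space (obs_space p)" for x
    using that by (auto simp: obs_space_def space_pair_measure space_PiM PiE_def extensional_def)
  then show ?thesis
    by (subst measurable_cong) auto
qed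

lemma measurable_obs_response [measurable]: "snd \<in> borel_measurable (obs_space p)"
  unfolding obs_space_def by measurable

definition w_coord :: "nat \<Rightarrow> (nat \<Rightarrow> real) \<times> real \<Rightarrow> real" where
  "w_coord j x = fst x j * snd x"

lemma measurable_w_coord [measurable]: "w_coord j \<in> borel_measurable (obs_space p)"
  unfolding w_coord_def by measurable

lemma real_choose_two: "real (n choose 2) = real n * (real n - 1) / 2"
  by (induction n) (auto simp: numeral_2_eq_2 field_simps)

lemma sum_lessThan_eq_choose_two: "(\<Sum>b<n. b) = n choose 2"
  by (induction n) (auto simp: numeral_2_eq_2)

lemma square_sum_le: "((x::real) + y)\<^sup>2 \<le> 2 * x\<^sup>2 + 2 * y\<^sup>2"
  using sum_squares_bound[of x y] by (simp add: power2_sum)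

lemma two_div_choose_two_le:
  assumes "2 \<le> n"
  shows "2 / real (n choose 2) \<le> 8 / (real n)\<^sup>2"
  using assms by (simp add: real_choose_two field_simps power2_eq_square)

lemma sum_pairs_decompose:
  fixes f :: "nat \<Rightarrow> real"
  shows "(\<Sum>b<n. \<Sum>a<b. c + f a + f b + g a b)
    = real (n choose 2) * c + (real n - 1) * (\<Sum>a<n. f a) + (\<Sum>b<n. \<Sum>a<b. g a b)"
proof (induction n)
  case (Suc n)
  have "(\<Sum>a<n. c + f a + f n + g a n) = real n * c + (\<Sum>a<n. f a) + real n * f n + (\<Sum>a<n. g a n)"
    by (simp add: sum.distrib)
  with Suc show ?case by (simp add: real_choose_two field_simps)
qed simp

lemma integral_sum_mult_sum:
  fixes Y Z :: "'i \<Rightarrow> 'a \<Rightarrow> real"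
  assumes int: "\<And>i k. i \<in> I \<Longrightarrow> k \<in> K \<Longrightarrow> integrable M (\<lambda>x. Y i x * Z k x)"
  shows "integrable M (\<lambda>x. (\<Sum>i\<in>I. Y i x) * (\<Sum>k\<in>K. Z k x))"
    and "(\<integral>x. (\<Sum>i\<in>I. Y i x) * (\<Sum>k\<in>K. Z k x) \<partial>M) = (\<Sum>i\<in>I. \<Sum>k\<in>K. \<integral>x. Y i x * Z k x \<partial>M)"
proof -
  have int_inner: "integrable M (\<lambda>x. \<Sum>k\<in>K. Y i x * Z k x)" if "i \<in> I" for i
    using int that by auto
  show "integrable M (\<lambda>x. (\<Sum>i\<in>I. Y i x) * (\<Sum>k\<in>K. Z k x))"
    unfolding sum_product using int_inner by auto
  have "(\<integral>x. (\<Sum>i\<in>I. Y i x) * (\<Sum>k\<in>K. Z k x) \<partial>M) = (\<Sum>i\<in>I. \<integral>x. (\<Sum>k\<in>K. Y i x * Z k x) \<partial>M)"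
    unfolding sum_product using int_inner by (rule Bochner_Integration.integral_sum)
  also have "\<dots> = (\<Sum>i\<in>I. \<Sum>k\<in>K. \<integral>x. Y i x * Z k x \<partial>M)"
    using int by (intro sum.cong refl Bochner_Integration.integral_sum) auto
  finally show "(\<integral>x. (\<Sum>i\<in>I. Y i x) * (\<Sum>k\<in>K. Z k x) \<partial>M) = (\<Sum>i\<in>I. \<Sum>k\<in>K. \<integral>x. Y i x * Z k x \<partial>M)" .
qed

lemma integral_square_sum_orthogonal:
  fixes Y :: "'i \<Rightarrow> 'a \<Rightarrow> real"
  assumes "finite I"
    and int: "\<And>i k. i \<in> I \<Longrightarrow> k \<in> I \<Longrightarrow> integrable M (\<lambda>x. Y i x * Y k x)"
    and orth: "\<And>i k. i \<in> I \<Longrightarrow> k \<in> I \<Longrightarrow> (\<integral>x. Y i x * Y k x \<partial>M) = (if i = k then s else 0)"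
  shows "integrable M (\<lambda>x. (\<Sum>i\<in>I. Y i x)\<^sup>2)"
    and "(\<integral>x. (\<Sum>i\<in>I. Y i x)\<^sup>2 \<partial>M) = real (card I) * s"
  using integral_sum_mult_sum[where I = I and K = I and Y = Y and Z = Y, OF int] \<open>finite I\<close>
  by (simp_all add: power2_eq_square orth cong: sum.cong)

lemma quadratic_form_le_frobenius:
  fixes b :: "'i \<Rightarrow> real" and A :: "'i \<Rightarrow> 'i \<Rightarrow> real"
  shows "(\<Sum>j\<in>I. \<Sum>k\<in>I. b j * b k * A j k) \<le> (\<Sum>j\<in>I. (b j)\<^sup>2) * sqrt (\<Sum>j\<in>I. \<Sum>k\<in>I. (A j k)\<^sup>2)"
proof -
  let ?q = "\<Sum>j\<in>I. \<Sum>k\<in>I. b j * b k * A j k"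
  have "?q\<^sup>2 \<le> (\<Sum>j\<in>I. \<Sum>k\<in>I. (b j * b k)\<^sup>2) * (\<Sum>j\<in>I. \<Sum>k\<in>I. (A j k)\<^sup>2)"
    using Cauchy_Schwarz_ineq_sum[of "\<lambda>(j, k). b j * b k" "\<lambda>(j, k). A j k" "I \<times> I"]
    by (simp add: sum.cartesian_product case_prod_beta)
  also have "(\<Sum>j\<in>I. \<Sum>k\<in>I. (b j * b k)\<^sup>2) = (\<Sum>j\<in>I. (b j)\<^sup>2)\<^sup>2"
    by (simp add: power2_eq_square[of "sum _ _"] sum_product power_mult_distrib)
  finally have "sqrt (?q\<^sup>2) \<le> sqrt ((\<Sum>j\<in>I. (b j)\<^sup>2)\<^sup>2 * (\<Sum>j\<in>I. \<Sum>k\<in>I. (A j k)\<^sup>2))"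
    by (rule real_sqrt_le_mono)
  then have "\<bar>?q\<bar> \<le> (\<Sum>j\<in>I. (b j)\<^sup>2) * sqrt (\<Sum>j\<in>I. \<Sum>k\<in>I. (A j k)\<^sup>2)"
    by (simp add: real_sqrt_mult sum_nonneg)
  then show ?thesis by linarith
qed

lemma (in finite_measure) measure_abs_gt_le_integral_square:
  fixes Z :: "'a \<Rightarrow> real"
  assumes [measurable]: "Z \<in> borel_measurable M"
    and "integrable M (\<lambda>x. (Z x)\<^sup>2)" "0 < \<epsilon>"
  shows "measure M {x \<in> space M. \<bar>Z x\<bar> > \<epsilon>} \<le> (\<integral>x. (Z x)\<^sup>2 \<partial>M) / \<epsilon>\<^sup>2"
proof -
  have "\<epsilon>\<^sup>2 \<le> (Z x)\<^sup>2" if "\<bar>Z x\<bar> > \<epsilon>" for x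
    using power_mono[of \<epsilon> "\<bar>Z x\<bar>" 2] that \<open>0 < \<epsilon>\<close> by simp
  then have "{x \<in> space M. \<bar>Z x\<bar> > \<epsilon>} \<subseteq> {x \<in> space M. (Z x)\<^sup>2 \<ge> \<epsilon>\<^sup>2}"
    by auto
  then have "measure M {x \<in> space M. \<bar>Z x\<bar> > \<epsilon>} \<le> measure M {x \<in> space M. (Z x)\<^sup>2 \<ge> \<epsilon>\<^sup>2}"
    by (intro finite_measure_mono) measurable
  also have "\<dots> \<le> (\<integral>x. (Z x)\<^sup>2 \<partial>M) / \<epsilon>\<^sup>2"
    using assms by (intro integral_Markov_inequality_measure[where A = "space M"]) auto
  finally show ?thesis .
qed

locale iid_sample = prob_space M for M :: "'a measure" +
  fixes p n :: nat
    and V :: "'a \<Rightarrow> (nat \<Rightarrow> real) \<times> real"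
    and D :: "nat \<Rightarrow> 'a \<Rightarrow> (nat \<Rightarrow> real) \<times> real"
  assumes V_meas [measurable]: "V \<in> measurable M (obs_space p)"
    and D_meas: "\<And>i. i < n \<Longrightarrow> D i \<in> measurable M (obs_space p)"
    and D_indep: "indep_vars (\<lambda>_. obs_space p) D {..<n}"
    and D_ident: "\<And>i. i < n \<Longrightarrow> distr M (obs_space p) (D i) = distr M (obs_space p) V"
    and integrable_w_coord_mult: "\<And>j k. j < p \<Longrightarrow> k < p \<Longrightarrow>
        integrable M (\<lambda>\<omega>. w_coord j (V \<omega>) * w_coord k (V \<omega>))"
begin

abbreviation "\<beta> \<equiv> beta_vec M V"

lemma beta_vec_eq: "\<beta> j = (\<integral>\<omega>. w_coord j (V \<omega>) \<partial>M)"
  by (simp add: beta_vec_def w_coord_def)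

lemma A_mat_eq: "A_mat M V j k = (\<integral>\<omega>. w_coord j (V \<omega>) * w_coord k (V \<omega>) \<partial>M)"
  by (simp add: A_mat_def w_coord_def)

lemma measurable_sample:
  "i < n \<Longrightarrow> f \<in> borel_measurable (obs_space p) \<Longrightarrow> (\<lambda>\<omega>. f (D i \<omega>)) \<in> borel_measurable M"
  by (rule measurable_compose[OF D_meas])

lemma integrable_sample_iff:
  fixes f :: "(nat \<Rightarrow> real) \<times> real \<Rightarrow> real"
  assumes "i < n" "f \<in> borel_measurable (obs_space p)"
  shows "integrable M (\<lambda>\<omega>. f (D i \<omega>)) \<longleftrightarrow> integrable M (\<lambda>\<omega>. f (V \<omega>))"
  using integrable_distr_eq[OF D_meas[OF assms(1)] assms(2)]
    integrable_distr_eq[OF V_meas assms(2)] D_ident[OF assms(1)] by simp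

lemma integral_sample_eq:
  fixes f :: "(nat \<Rightarrow> real) \<times> real \<Rightarrow> real"
  assumes "i < n" "f \<in> borel_measurable (obs_space p)"
  shows "(\<integral>\<omega>. f (D i \<omega>) \<partial>M) = (\<integral>\<omega>. f (V \<omega>) \<partial>M)"
  using integral_distr[OF D_meas[OF assms(1)] assms(2)]
    integral_distr[OF V_meas assms(2)] D_ident[OF assms(1)] by simp

lemma integral_prod_sample:
  fixes F :: "nat \<Rightarrow> (nat \<Rightarrow> real) \<times> real \<Rightarrow> real"
  assumes K: "K \<subseteq> {..<n}"
    and F_meas: "\<And>i. i \<in> K \<Longrightarrow> F i \<in> borel_measurable (obs_space p)"
    and F_int: "\<And>i. i \<in> K \<Longrightarrow> integrable M (\<lambda>\<omega>. F i (V \<omega>))"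
  shows "integrable M (\<lambda>\<omega>. \<Prod>i\<in>K. F i (D i \<omega>))"
    and "(\<integral>\<omega>. (\<Prod>i\<in>K. F i (D i \<omega>)) \<partial>M) = (\<Prod>i\<in>K. \<integral>\<omega>. F i (V \<omega>) \<partial>M)"
proof -
  have fin: "finite K"
    using K finite_subset by blast
  have indep: "indep_vars (\<lambda>_. borel) (\<lambda>i \<omega>. F i (D i \<omega>)) K"
    by (rule indep_vars_compose2[OF indep_vars_subset[OF D_indep K]]) (use F_meas in auto)
  have int: "\<And>i. i \<in> K \<Longrightarrow> integrable M (\<lambda>\<omega>. F i (D i \<omega>))"
    using integrable_sample_iff F_int F_meas K by blast
  show "integrable M (\<lambda>\<omega>. \<Prod>i\<in>K. F i (D i \<omega>))"
    using indep_vars_integrable[OF fin indep int] by simp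
  have "(\<integral>\<omega>. (\<Prod>i\<in>K. F i (D i \<omega>)) \<partial>M) = (\<Prod>i\<in>K. \<integral>\<omega>. F i (D i \<omega>) \<partial>M)"
    using indep_vars_lebesgue_integral[OF fin indep int] by simp
  also have "\<dots> = (\<Prod>i\<in>K. \<integral>\<omega>. F i (V \<omega>) \<partial>M)"
    by (rule prod.cong) (use integral_sample_eq F_meas K in auto)
  finally show "(\<integral>\<omega>. (\<Prod>i\<in>K. F i (D i \<omega>)) \<partial>M) = (\<Prod>i\<in>K. \<integral>\<omega>. F i (V \<omega>) \<partial>M)" .
qed

lemma integrable_w_coord:
  assumes "j < p"
  shows "integrable M (\<lambda>\<omega>. w_coord j (V \<omega>))"
proof (rule square_integrable_imp_integrable)
  show "(\<lambda>\<omega>. w_coord j (V \<omega>)) \<in> borel_measurable M"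
    by measurable
  show "integrable M (\<lambda>\<omega>. (w_coord j (V \<omega>))\<^sup>2)"
    using integrable_w_coord_mult[OF assms assms] by (simp add: power2_eq_square)
qed

definition w_centered :: "nat \<Rightarrow> (nat \<Rightarrow> real) \<times> real \<Rightarrow> real" where
  "w_centered j x = w_coord j x - \<beta> j"

lemma measurable_w_centered [measurable]: "w_centered j \<in> borel_measurable (obs_space p)"
  unfolding w_centered_def by measurable

lemma integrable_w_centered: "j < p \<Longrightarrow> integrable M (\<lambda>\<omega>. w_centered j (V \<omega>))"
  using integrable_w_coord by (simp add: w_centered_def)

lemma integral_w_centered: "j < p \<Longrightarrow> (\<integral>\<omega>. w_centered j (V \<omega>) \<partial>M) = 0"
  using integrable_w_coord[of j] by (simp add: w_centered_def beta_vec_eq prob_space)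

lemma w_centered_mult_eq: "w_centered j x * w_centered k x
    = w_coord j x * w_coord k x - \<beta> k * w_coord j x - \<beta> j * w_coord k x + \<beta> j * \<beta> k"
  by (simp add: w_centered_def algebra_simps)

lemma integrable_w_centered_mult:
  "j < p \<Longrightarrow> k < p \<Longrightarrow> integrable M (\<lambda>\<omega>. w_centered j (V \<omega>) * w_centered k (V \<omega>))"
  unfolding w_centered_mult_eq using integrable_w_coord_mult integrable_w_coord by auto

lemma integral_w_centered_mult:
  "j < p \<Longrightarrow> k < p \<Longrightarrow>
    (\<integral>\<omega>. w_centered j (V \<omega>) * w_centered k (V \<omega>) \<partial>M) = A_mat M V j k - \<beta> j * \<beta> k"
  unfolding w_centered_mult_eq using integrable_w_coord_mult integrable_w_coord
  by (simp add: A_mat_eq beta_vec_eq prob_space)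

lemma sum_sum_beta_mult_square: "(\<Sum>j<p. \<Sum>k<p. (\<beta> j * \<beta> k)\<^sup>2) = (tau2 M p V)\<^sup>2"
  unfolding tau2_def power2_eq_square[of "sum _ _"] sum_product power_mult_distrib ..

text \<open>lin_part x = E h(x, W) - tau^2 is the first Hoeffding projection of the kernel
  h(x, y) = W(x)^T W(y), and degen_kernel below is the degenerate remainder of h.\<close>

definition lin_part :: "(nat \<Rightarrow> real) \<times> real \<Rightarrow> real" where
  "lin_part x = (\<Sum>j<p. \<beta> j * w_centered j x)"

lemma measurable_lin_part [measurable]: "lin_part \<in> borel_measurable (obs_space p)"
  unfolding lin_part_def by measurable

lemma integrable_lin_part: "integrable M (\<lambda>\<omega>. lin_part (V \<omega>))"
  unfolding lin_part_def using integrable_w_centered by auto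

lemma integral_lin_part: "(\<integral>\<omega>. lin_part (V \<omega>) \<partial>M) = 0"
  unfolding lin_part_def using integrable_w_centered integral_w_centered
  by (simp add: Bochner_Integration.integral_sum)

lemma integral_lin_part_square:
  shows "integrable M (\<lambda>\<omega>. (lin_part (V \<omega>))\<^sup>2)"
    and "(\<integral>\<omega>. (lin_part (V \<omega>))\<^sup>2 \<partial>M)
      = (\<Sum>j<p. \<Sum>k<p. \<beta> j * \<beta> k * A_mat M V j k) - (tau2 M p V)\<^sup>2"
proof -
  let ?Y = "\<lambda>j \<omega>. \<beta> j * w_centered j (V \<omega>)"
  have YY: "?Y j \<omega> * ?Y k \<omega> = \<beta> j * \<beta> k * (w_centered j (V \<omega>) * w_centered k (V \<omega>))"
    for j k \<omega>
    by (simp add: ac_simps)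
  have int: "integrable M (\<lambda>\<omega>. ?Y j \<omega> * ?Y k \<omega>)" if "j \<in> {..<p}" "k \<in> {..<p}" for j k
    unfolding YY using integrable_w_centered_mult that by simp
  note sum_sq =
    integral_sum_mult_sum[where I = "{..<p}" and K = "{..<p}" and Y = ?Y and Z = ?Y, OF int]
  show "integrable M (\<lambda>\<omega>. (lin_part (V \<omega>))\<^sup>2)"
    using sum_sq(1) by (simp add: lin_part_def power2_eq_square)
  have "(\<integral>\<omega>. (lin_part (V \<omega>))\<^sup>2 \<partial>M) = (\<Sum>j<p. \<Sum>k<p. \<integral>\<omega>. ?Y j \<omega> * ?Y k \<omega> \<partial>M)"
    using sum_sq(2) by (simp add: lin_part_def power2_eq_square)
  also have "\<dots> = (\<Sum>j<p. \<Sum>k<p. \<beta> j * \<beta> k * (A_mat M V j k - \<beta> j * \<beta> k))"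
    by (intro sum.cong refl) (simp add: YY integral_w_centered_mult)
  also have "\<dots> = (\<Sum>j<p. \<Sum>k<p. \<beta> j * \<beta> k * A_mat M V j k) - (tau2 M p V)\<^sup>2"
    unfolding sum_sum_beta_mult_square[symmetric]
    by (simp add: right_diff_distrib sum_subtractf power2_eq_square)
  finally show "(\<integral>\<omega>. (lin_part (V \<omega>))\<^sup>2 \<partial>M)
      = (\<Sum>j<p. \<Sum>k<p. \<beta> j * \<beta> k * A_mat M V j k) - (tau2 M p V)\<^sup>2" .
qed

lemma integral_lin_part_square_le:
  "(\<integral>\<omega>. (lin_part (V \<omega>))\<^sup>2 \<partial>M) \<le> tau2 M p V * sqrt (A_frob2 M p V)"
  using integral_lin_part_square(2) zero_le_power2[of "tau2 M p V"]
    quadratic_form_le_frobenius[where b = \<beta> and I = "{..<p}" and A = "A_mat M V"]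
  unfolding tau2_def A_frob2_def by linarith

definition cov_frob2 :: real where
  "cov_frob2 = (\<Sum>j<p. \<Sum>k<p. (A_mat M V j k - \<beta> j * \<beta> k)\<^sup>2)"

lemma cov_frob2_nonneg: "0 \<le> cov_frob2"
  by (simp add: cov_frob2_def sum_nonneg)

lemma cov_frob2_le: "cov_frob2 \<le> A_frob2 M p V"
proof -
  let ?q = "\<Sum>j<p. \<Sum>k<p. \<beta> j * \<beta> k * A_mat M V j k"
  have "cov_frob2 = A_frob2 M p V - 2 * ?q + (tau2 M p V)\<^sup>2"
    unfolding cov_frob2_def A_frob2_def sum_sum_beta_mult_square[symmetric]
    by (simp add: power2_diff sum.distrib sum_subtractf sum_distrib_left algebra_simps)
  moreover have "(tau2 M p V)\<^sup>2 \<le> ?q"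
  proof -
    have "0 \<le> (\<integral>\<omega>. (lin_part (V \<omega>))\<^sup>2 \<partial>M)"
      by simp
    then show ?thesis
      using integral_lin_part_square(2) by simp
  qed
  ultimately show ?thesis
    using zero_le_power2[of "tau2 M p V"] by linarith
qed

lemma integral_lin_part_sample_mult:
  assumes "a < n" "c < n"
  shows "integrable M (\<lambda>\<omega>. lin_part (D a \<omega>) * lin_part (D c \<omega>))"
    and "(\<integral>\<omega>. lin_part (D a \<omega>) * lin_part (D c \<omega>) \<partial>M)
      = (if a = c then (\<integral>\<omega>. (lin_part (V \<omega>))\<^sup>2 \<partial>M) else 0)"
proof -
  have "integrable M (\<lambda>\<omega>. lin_part (D a \<omega>) * lin_part (D c \<omega>)) \<and>
    (\<integral>\<omega>. lin_part (D a \<omega>) * lin_part (D c \<omega>) \<partial>M)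
      = (if a = c then (\<integral>\<omega>. (lin_part (V \<omega>))\<^sup>2 \<partial>M) else 0)"
  proof (cases "a = c")
    case True
    have meas: "(\<lambda>x. (lin_part x)\<^sup>2) \<in> borel_measurable (obs_space p)"
      by measurable
    from True show ?thesis
      using integrable_sample_iff[OF \<open>a < n\<close> meas] integral_sample_eq[OF \<open>a < n\<close> meas]
        integral_lin_part_square(1) by (simp add: power2_eq_square)
  next
    case False
    then have "lin_part (D a \<omega>) * lin_part (D c \<omega>) = (\<Prod>i\<in>{a, c}. lin_part (D i \<omega>))" for \<omega>
      by simp
    with False show ?thesis
      using integral_prod_sample[of "{a, c}" "\<lambda>_. lin_part"] assms
        integrable_lin_part integral_lin_part by simp
  qed
  then show "integrable M (\<lambda>\<omega>. lin_part (D a \<omega>) * lin_part (D c \<omega>))"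
    and "(\<integral>\<omega>. lin_part (D a \<omega>) * lin_part (D c \<omega>) \<partial>M)
      = (if a = c then (\<integral>\<omega>. (lin_part (V \<omega>))\<^sup>2 \<partial>M) else 0)"
    by auto
qed

lemma integral_w_centered_quadruple:
  assumes "a < b" "b < n" "c < e" "e < n" "j < p" "k < p"
  shows "integrable M (\<lambda>\<omega>. w_centered j (D a \<omega>) * w_centered j (D b \<omega>)
      * (w_centered k (D c \<omega>) * w_centered k (D e \<omega>)))"
    and "(\<integral>\<omega>. w_centered j (D a \<omega>) * w_centered j (D b \<omega>)
      * (w_centered k (D c \<omega>) * w_centered k (D e \<omega>)) \<partial>M)
      = (if a = c \<and> b = e then (A_mat M V j k - \<beta> j * \<beta> k)\<^sup>2 else 0)"
proof -
  \<comment> \<open>an index occurring only once among a, b, c, e contributes a factor E (W_j - beta_j) = 0\<close>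
  define K where "K = {a, b, c, e}"
  define F where "F i x = (if i = a then w_centered j x else 1) * (if i = b then w_centered j x else 1)
    * (if i = c then w_centered k x else 1) * (if i = e then w_centered k x else 1)" for i x
  have K: "K \<subseteq> {..<n}" "finite K"
    using assms by (auto simp: K_def)
  have F_meas: "F i \<in> borel_measurable (obs_space p)" for i
    unfolding F_def by measurable
  have F_int: "integrable M (\<lambda>\<omega>. F i (V \<omega>))" for i
    using assms integrable_w_centered integrable_w_centered_mult unfolding F_def
    by (cases "i = a"; cases "i = b"; cases "i = c"; cases "i = e") (auto simp: mult.commute)
  have prod_F: "(\<Prod>i\<in>K. F i (D i \<omega>)) = w_centered j (D a \<omega>) * w_centered j (D b \<omega>)
      * (w_centered k (D c \<omega>) * w_centered k (D e \<omega>))" for \<omega>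
    unfolding F_def prod.distrib using K(2)
    by (simp add: K_def if_distrib cong: if_cong)
  note indep = integral_prod_sample[where F = F, OF K(1) F_meas F_int, unfolded prod_F]
  show "integrable M (\<lambda>\<omega>. w_centered j (D a \<omega>) * w_centered j (D b \<omega>)
      * (w_centered k (D c \<omega>) * w_centered k (D e \<omega>)))"
    by (rule indep(1))
  have "(\<Prod>i\<in>K. \<integral>\<omega>. F i (V \<omega>) \<partial>M)
      = (if a = c \<and> b = e then (A_mat M V j k - \<beta> j * \<beta> k)\<^sup>2 else 0)"
  proof (cases "a = c \<and> b = e")
    case True
    then have "K = {a, b}"
      by (auto simp: K_def)
    have "F i = (\<lambda>x. w_centered j x * w_centered k x)" if "i \<in> {a, b}" for i
      using that True assms by (auto simp: F_def fun_eq_iff)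
    then have "(\<Prod>i\<in>K. \<integral>\<omega>. F i (V \<omega>) \<partial>M)
        = (\<integral>\<omega>. w_centered j (V \<omega>) * w_centered k (V \<omega>) \<partial>M)\<^sup>2"
      using \<open>K = {a, b}\<close> assms by (simp add: power2_eq_square)
    with True assms show ?thesis
      by (simp add: integral_w_centered_mult)
  next
    case False
    then have "a \<notin> {c, e} \<or> b \<notin> {c, e}"
      using assms by auto
    then obtain u where "u \<in> {a, b}" "u \<notin> {c, e}"
      by blast
    then have "F u = w_centered j" "u \<in> K"
      using assms by (auto simp: F_def K_def fun_eq_iff)
    then have "(\<Prod>i\<in>K. \<integral>\<omega>. F i (V \<omega>) \<partial>M) = 0"
      using integral_w_centered[OF \<open>j < p\<close>] K(2)
      by (intro prod_zero) (auto intro!: bexI[of _ u])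
    then show ?thesis
      unfolding if_not_P[OF False] .
  qed
  with indep(2) show "(\<integral>\<omega>. w_centered j (D a \<omega>) * w_centered j (D b \<omega>)
      * (w_centered k (D c \<omega>) * w_centered k (D e \<omega>)) \<partial>M)
      = (if a = c \<and> b = e then (A_mat M V j k - \<beta> j * \<beta> k)\<^sup>2 else 0)"
    by simp
qed

definition degen_kernel :: "(nat \<Rightarrow> real) \<times> real \<Rightarrow> (nat \<Rightarrow> real) \<times> real \<Rightarrow> real" where
  "degen_kernel x y = (\<Sum>j<p. w_centered j x * w_centered j y)"

lemma kernel_decomposition:
  "(\<Sum>j<p. w_coord j x * w_coord j y) = tau2 M p V + lin_part x + lin_part y + degen_kernel x y"
proof -
  have "w_coord j x * w_coord j y
      = (\<beta> j)\<^sup>2 + \<beta> j * w_centered j x + \<beta> j * w_centered j y + w_centered j x * w_centered j y" for j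
    by (simp add: w_centered_def power2_eq_square algebra_simps)
  then show ?thesis
    by (simp add: sum.distrib tau2_def lin_part_def degen_kernel_def)
qed

lemma integral_degen_kernel_sample_mult:
  assumes "a < b" "b < n" "c < e" "e < n"
  shows "integrable M (\<lambda>\<omega>. degen_kernel (D a \<omega>) (D b \<omega>) * degen_kernel (D c \<omega>) (D e \<omega>))"
    and "(\<integral>\<omega>. degen_kernel (D a \<omega>) (D b \<omega>) * degen_kernel (D c \<omega>) (D e \<omega>) \<partial>M)
      = (if a = c \<and> b = e then cov_frob2 else 0)"
proof -
  let ?Y = "\<lambda>j \<omega>. w_centered j (D a \<omega>) * w_centered j (D b \<omega>)"
  let ?Z = "\<lambda>k \<omega>. w_centered k (D c \<omega>) * w_centered k (D e \<omega>)"
  note quadruple = integral_w_centered_quadruple[OF assms]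
  have int: "integrable M (\<lambda>\<omega>. ?Y j \<omega> * ?Z k \<omega>)" if "j \<in> {..<p}" "k \<in> {..<p}" for j k
    using quadruple(1) that by simp
  note sum_mult =
    integral_sum_mult_sum[where I = "{..<p}" and K = "{..<p}" and Y = ?Y and Z = ?Z, OF int]
  show "integrable M (\<lambda>\<omega>. degen_kernel (D a \<omega>) (D b \<omega>) * degen_kernel (D c \<omega>) (D e \<omega>))"
    using sum_mult(1) by (simp add: degen_kernel_def)
  have "(\<integral>\<omega>. degen_kernel (D a \<omega>) (D b \<omega>) * degen_kernel (D c \<omega>) (D e \<omega>) \<partial>M)
      = (\<Sum>j<p. \<Sum>k<p. if a = c \<and> b = e then (A_mat M V j k - \<beta> j * \<beta> k)\<^sup>2 else 0)"
    using sum_mult(2) quadruple(2) by (simp add: degen_kernel_def)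
  also have "\<dots> = (if a = c \<and> b = e then cov_frob2 else 0)"
    by (cases "a = c \<and> b = e") (auto simp: cov_frob2_def)
  finally show "(\<integral>\<omega>. degen_kernel (D a \<omega>) (D b \<omega>) * degen_kernel (D c \<omega>) (D e \<omega>) \<partial>M)
      = (if a = c \<and> b = e then cov_frob2 else 0)" .
qed

definition lin_sum :: "'a \<Rightarrow> real" where
  "lin_sum \<omega> = (\<Sum>a<n. lin_part (D a \<omega>))"

definition degen_sum :: "'a \<Rightarrow> real" where
  "degen_sum \<omega> = (\<Sum>b<n. \<Sum>a<b. degen_kernel (D a \<omega>) (D b \<omega>))"

lemma integral_lin_sum_square:
  shows "integrable M (\<lambda>\<omega>. (lin_sum \<omega>)\<^sup>2)"
    and "(\<integral>\<omega>. (lin_sum \<omega>)\<^sup>2 \<partial>M) = real n * (\<integral>\<omega>. (lin_part (V \<omega>))\<^sup>2 \<partial>M)"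
  using integral_square_sum_orthogonal[where I = "{..<n}" and Y = "\<lambda>a \<omega>. lin_part (D a \<omega>)"]
    integral_lin_part_sample_mult
  by (simp_all add: lin_sum_def)

lemma integral_degen_sum_square:
  shows "integrable M (\<lambda>\<omega>. (degen_sum \<omega>)\<^sup>2)"
    and "(\<integral>\<omega>. (degen_sum \<omega>)\<^sup>2 \<partial>M) = real (n choose 2) * cov_frob2"
proof -
  define I where "I = (SIGMA b:{..<n}. {..<b})"
  have degen_sum_eq: "degen_sum \<omega> = (\<Sum>i\<in>I. degen_kernel (D (snd i) \<omega>) (D (fst i) \<omega>))" for \<omega>
    by (simp add: degen_sum_def I_def sum.Sigma case_prod_beta)
  have "card I = n choose 2"
    by (simp add: I_def sum_lessThan_eq_choose_two)
  moreover have "finite I"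
    by (simp add: I_def)
  ultimately show "integrable M (\<lambda>\<omega>. (degen_sum \<omega>)\<^sup>2)"
    and "(\<integral>\<omega>. (degen_sum \<omega>)\<^sup>2 \<partial>M) = real (n choose 2) * cov_frob2"
    using integral_square_sum_orthogonal[where I = I and s = cov_frob2
        and Y = "\<lambda>i \<omega>. degen_kernel (D (snd i) \<omega>) (D (fst i) \<omega>)"]
      integral_degen_kernel_sample_mult
    by (auto simp: degen_sum_eq I_def prod_eq_iff)
qed

lemma tau2_hat_decomposition:
  assumes "2 \<le> n"
  shows "tau2_hat n p D \<omega> - tau2 M p V
    = 2 / real n * lin_sum \<omega> + degen_sum \<omega> / real (n choose 2)"
proof -
  have "tau2_hat n p D \<omega> = (\<Sum>b<n. \<Sum>a<b.
      tau2 M p V + lin_part (D a \<omega>) + lin_part (D b \<omega>) + degen_kernel (D a \<omega>) (D b \<omega>))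
      / real (n choose 2)"
    by (simp add: tau2_hat_def kernel_decomposition[symmetric] w_coord_def divide_inverse_commute)
  also have "\<dots> = (real (n choose 2) * tau2 M p V + (real n - 1) * lin_sum \<omega> + degen_sum \<omega>)
      / real (n choose 2)"
    by (simp only: sum_pairs_decompose lin_sum_def degen_sum_def)
  also have "\<dots> = tau2 M p V + (real n - 1) / real (n choose 2) * lin_sum \<omega>
      + degen_sum \<omega> / real (n choose 2)"
    using assms by (simp add: add_divide_distrib)
  also have "(real n - 1) / real (n choose 2) = 2 / real n"
    using assms by (simp add: real_choose_two field_simps)
  finally show ?thesis
    by simp
qed

lemma measurable_tau2_hat [measurable]: "tau2_hat n p D \<in> borel_measurable M"
proof -
  have "tau2_hat n p D = (\<lambda>\<omega>. inverse (real (n choose 2)) *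
      (\<Sum>i2<n. \<Sum>i1<i2. \<Sum>j<p. w_coord j (D i1 \<omega>) * w_coord j (D i2 \<omega>)))"
    by (simp add: fun_eq_iff tau2_hat_def w_coord_def)
  also have "\<dots> \<in> borel_measurable M"
    by (intro borel_measurable_times borel_measurable_const borel_measurable_sum
        measurable_sample measurable_w_coord) auto
  finally show ?thesis .
qed

lemma tau2_hat_error_square_le:
  assumes "2 \<le> n"
  shows "(tau2_hat n p D \<omega> - tau2 M p V)\<^sup>2
    \<le> 8 / (real n)\<^sup>2 * (lin_sum \<omega>)\<^sup>2 + 2 / (real (n choose 2))\<^sup>2 * (degen_sum \<omega>)\<^sup>2"
  using square_sum_le[of "2 / real n * lin_sum \<omega>" "degen_sum \<omega> / real (n choose 2)"]
  by (simp add: tau2_hat_decomposition[OF assms] power_mult_distrib power_divide)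

lemma tau2_hat_mse_le:
  assumes "2 \<le> n"
  shows "integrable M (\<lambda>\<omega>. (tau2_hat n p D \<omega> - tau2 M p V)\<^sup>2)"
    and "(\<integral>\<omega>. (tau2_hat n p D \<omega> - tau2 M p V)\<^sup>2 \<partial>M)
      \<le> 8 * (tau2 M p V * sqrt (A_frob2 M p V / (real n)\<^sup>2) + A_frob2 M p V / (real n)\<^sup>2)"
proof -
  let ?G = "\<lambda>\<omega>. 8 / (real n)\<^sup>2 * (lin_sum \<omega>)\<^sup>2 + 2 / (real (n choose 2))\<^sup>2 * (degen_sum \<omega>)\<^sup>2"
  have G_int: "integrable M ?G"
    using integral_lin_sum_square(1) integral_degen_sum_square(1) by simp
  show Z_int: "integrable M (\<lambda>\<omega>. (tau2_hat n p D \<omega> - tau2 M p V)\<^sup>2)"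
    by (rule Bochner_Integration.integrable_bound[OF G_int])
      (use tau2_hat_error_square_le[OF assms] in auto)
  have "(\<integral>\<omega>. (tau2_hat n p D \<omega> - tau2 M p V)\<^sup>2 \<partial>M) \<le> (\<integral>\<omega>. ?G \<omega> \<partial>M)"
    by (rule integral_mono[OF Z_int G_int tau2_hat_error_square_le[OF assms]])
  also have "\<dots> = 8 / real n * (\<integral>\<omega>. (lin_part (V \<omega>))\<^sup>2 \<partial>M)
      + 2 / real (n choose 2) * cov_frob2"
    using integral_lin_sum_square integral_degen_sum_square assms by (simp add: power2_eq_square)
  also have "\<dots> \<le> 8 / real n * (tau2 M p V * sqrt (A_frob2 M p V))
      + 8 / (real n)\<^sup>2 * A_frob2 M p V"
    using integral_lin_part_square_le two_div_choose_two_le[OF assms] cov_frob2_le cov_frob2_nonneg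
    by (intro add_mono mult_left_mono mult_mono) auto
  also have "\<dots> = 8 * (tau2 M p V * sqrt (A_frob2 M p V / (real n)\<^sup>2) + A_frob2 M p V / (real n)\<^sup>2)"
    using assms by (simp add: real_sqrt_divide field_simps)
  finally show "(\<integral>\<omega>. (tau2_hat n p D \<omega> - tau2 M p V)\<^sup>2 \<partial>M)
      \<le> 8 * (tau2 M p V * sqrt (A_frob2 M p V / (real n)\<^sup>2) + A_frob2 M p V / (real n)\<^sup>2)" .
qed

lemma tau2_hat_deviation_le:
  assumes "2 \<le> n" "0 < \<epsilon>"
  shows "measure M {\<omega> \<in> space M. \<bar>tau2_hat n p D \<omega> - tau2 M p V\<bar> > \<epsilon>}
    \<le> 8 * (tau2 M p V * sqrt (A_frob2 M p V / (real n)\<^sup>2) + A_frob2 M p V / (real n)\<^sup>2) / \<epsilon>\<^sup>2"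
proof -
  have "measure M {\<omega> \<in> space M. \<bar>tau2_hat n p D \<omega> - tau2 M p V\<bar> > \<epsilon>}
      \<le> (\<integral>\<omega>. (tau2_hat n p D \<omega> - tau2 M p V)\<^sup>2 \<partial>M) / \<epsilon>\<^sup>2"
    by (rule measure_abs_gt_le_integral_square)
      (use tau2_hat_mse_le(1)[OF assms(1)] assms(2) in auto)
  also have "\<dots> \<le> 8 * (tau2 M p V * sqrt (A_frob2 M p V / (real n)\<^sup>2) + A_frob2 M p V / (real n)\<^sup>2)
      / \<epsilon>\<^sup>2"
    by (rule divide_right_mono[OF tau2_hat_mse_le(2)[OF assms(1)]]) simp
  finally show ?thesis .
qed

end

theorem proposition2:
  fixes M :: "nat \<Rightarrow> 'a measure"
    and p :: "nat \<Rightarrow> nat"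
    and V :: "nat \<Rightarrow> 'a \<Rightarrow> (nat \<Rightarrow> real) \<times> real"
    and D :: "nat \<Rightarrow> nat \<Rightarrow> 'a \<Rightarrow> (nat \<Rightarrow> real) \<times> real"
  assumes prob: "\<And>n. prob_space (M n)"
    and V_meas: "\<And>n. V n \<in> measurable (M n) (obs_space (p n))"
    and D_meas: "\<And>n i. i < n \<Longrightarrow> D n i \<in> measurable (M n) (obs_space (p n))"
    and D_indep: "\<And>n. prob_space.indep_vars (M n) (\<lambda>_. obs_space (p n)) (D n) {..<n}"
    and D_ident: "\<And>n i. i < n \<Longrightarrow>
        distr (M n) (obs_space (p n)) (D n i) = distr (M n) (obs_space (p n)) (V n)"
    and Y2: "\<And>n. integrable (M n) (\<lambda>\<omega>. (snd (V n \<omega>))\<^sup>2)"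
    and X2: "\<And>n. integrable (M n) (\<lambda>\<omega>. \<Sum>j<p n. (fst (V n \<omega>) j)\<^sup>2)"
    and EX0: "\<And>n j. j < p n \<Longrightarrow> (\<integral>\<omega>. fst (V n \<omega>) j \<partial>M n) = 0"
    and VarX: "\<And>n j k. j < p n \<Longrightarrow> k < p n \<Longrightarrow>
        (\<integral>\<omega>. fst (V n \<omega>) j * fst (V n \<omega>) k \<partial>M n) = (if j = k then 1 else 0)"
    and A_fin: "\<And>n j k. j < p n \<Longrightarrow> k < p n \<Longrightarrow>
        integrable (M n) (\<lambda>\<omega>. (fst (V n \<omega>) j * snd (V n \<omega>)) * (fst (V n \<omega>) k * snd (V n \<omega>)))"
    and A_lim: "(\<lambda>n. A_frob2 (M n) (p n) (V n) / (real n)\<^sup>2) \<longlonglongrightarrow> 0"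
    and tau_bdd: "\<exists>C. \<forall>n. tau2 (M n) (p n) (V n) \<le> C"
  shows "\<forall>\<epsilon>>0. (\<lambda>n. measure (M n) {\<omega> \<in> space (M n).
            \<bar>tau2_hat n (p n) (D n) \<omega> - tau2 (M n) (p n) (V n)\<bar> > \<epsilon>}) \<longlonglongrightarrow> 0"
proof (intro allI impI)
  fix \<epsilon> :: real
  assume "0 < \<epsilon>"
  obtain C where C: "\<And>n. tau2 (M n) (p n) (V n) \<le> C"
    using tau_bdd by blast
  have sample: "iid_sample (M n) (p n) n (V n) (D n)" for n
    using prob V_meas D_meas D_indep D_ident A_fin
    by (intro iid_sample.intro iid_sample_axioms.intro) (simp_all add: w_coord_def)
  define F where "F n = A_frob2 (M n) (p n) (V n) / (real n)\<^sup>2" for n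
  define U where "U n = 8 * (C * sqrt (F n) + F n) / \<epsilon>\<^sup>2" for n
  have "U \<longlonglongrightarrow> 8 * (C * sqrt 0 + 0) / \<epsilon>\<^sup>2"
    unfolding U_def F_def by (intro tendsto_intros A_lim) (use \<open>0 < \<epsilon>\<close> in simp)
  then have U_lim: "U \<longlonglongrightarrow> 0"
    by simp
  have bound: "measure (M n) {\<omega> \<in> space (M n).
      \<bar>tau2_hat n (p n) (D n) \<omega> - tau2 (M n) (p n) (V n)\<bar> > \<epsilon>} \<le> U n" if "2 \<le> n" for n
  proof -
    have "0 \<le> F n"
      by (simp add: F_def A_frob2_def sum_nonneg)
    then have "8 * (tau2 (M n) (p n) (V n) * sqrt (F n) + F n) / \<epsilon>\<^sup>2 \<le> U n"
      unfolding U_def using C[of n]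
      by (intro divide_right_mono mult_left_mono add_right_mono mult_right_mono) simp_all
    then show ?thesis
      using iid_sample.tau2_hat_deviation_le[OF sample that \<open>0 < \<epsilon>\<close>] unfolding F_def by linarith
  qed
  show "(\<lambda>n. measure (M n) {\<omega> \<in> space (M n).
      \<bar>tau2_hat n (p n) (D n) \<omega> - tau2 (M n) (p n) (V n)\<bar> > \<epsilon>}) \<longlonglongrightarrow> 0"
    by (rule tendsto_sandwich[OF _ eventually_sequentiallyI[of 2, OF bound] tendsto_const U_lim])
      simp
qed

end
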